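(* Let $\alpha\in(1,e/2)$. Consider a 2-armed Gaussian bandit with unit-variance rewards of means $\mu_1\neq\mu_2$ and cost means $c_1,c_2$. For $\delta\in(0,1)$ let $\tau_\delta$ be the stopping time of the Chernoff-Overlap algorithm with parameters $\delta,\alpha,B$ (all runs built on the same underlying sequence of observations). Then with probability $1$, \[ \limsup_{\delta\to0}\frac{J(\tau_\delta)}{\log(1/\delta)}\le\frac{2\alpha(\sqrt{c_1}+\sqrt{c_2})^2}{(\mu_1-\mu_2)^2}. \]
   Context: Two arms $\{1,2\}$; arm $a$ has reward distribution $\mathcal{N}(\mu_a,1)$ and cost distribution with mean $c_a$ supported in $[\ell,1]$, $\ell>0$. At round $t$ the algorithm pulls $A_t$ and observes independent reward $R_t$ and cost $C_t$ from arm $A_t$; $J(t)=\sum_{k\le t}C_k$. $d(\mu,\mu')=(\mu-\mu')^2/2$. $N_a(t)$ is the number of pulls, $\hat\mu_a(t),\hat c_a(t)$ empirical means, $\hat\mu_{a,b}(t)=\frac{N_a(t)\hat\mu_a(t)+N_b(t)\hat\mu_b(t)}{N_a(t)+N_b(t)}$, $Z_{a,b}(t)=N_a(t)d(\hat\mu_a(t),\hat\mu_{a,b}(t))+N_b(t)d(\hat\mu_b(t),\hat\mu_{a,b}(t))$. Chernoff-Overlap (CO) algorithm (parameters $\delta$, $\alpha$, a constant $B>0$): maintain remaining set $\mathcal{R}$, initially all arms; pull each arm once; then at each subsequent $t$: if $|\mathcal{R}|\le1$ stop; otherwise with $a^*(t)=\arg\max_a\hat\mu_a(t)$ remove every $a$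 with $Z_{a^*(t),a}(t)>\log(Bt^\alpha/\delta)$ from $\mathcal{R}$, and pull an arm in $\arg\min_{a\in\mathcal{R}}\sqrt{\hat c_a(t)}N_a(t)$; output the remaining arm. *)

theory Defs
  imports "HOL-Probability.Probability"
begin

text \<open>Arms are 1 and 2.
  r a k and c a k are the reward and cost observed at the (k+1)-th pull of arm a
  (k = 0,1,...). A state is (N, Rem): the pull counts N a and the remaining set.\<close>

definition dG :: "real \<Rightarrow> real \<Rightarrow> real" where
  "dG x y = (x - y)^2 / 2"

definition emp :: "(nat \<Rightarrow> nat \<Rightarrow> real) \<Rightarrow> nat \<Rightarrow> nat \<Rightarrow> real" where
  "emp x a n = (\<Sum>k<n. x a k) / real n"

definition Zstat :: "(nat \<Rightarrow> nat \<Rightarrow> real) \<Rightarrow> (nat \<Rightarrow> nat) \<Rightarrow> nat \<Rightarrow> nat \<Rightarrow> real" where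
  "Zstat r N a b =
     (let m = (real (N a) * emp r a (N a) + real (N b) * emp r b (N b)) / real (N a + N b)
      in real (N a) * dG (emp r a (N a)) m + real (N b) * dG (emp r b (N b)) m)"

definition best_arm :: "(nat \<Rightarrow> nat \<Rightarrow> real) \<Rightarrow> (nat \<Rightarrow> nat) \<Rightarrow> nat" where
  "best_arm r N = (if emp r 2 (N 2) > emp r 1 (N 1) then 2 else 1)"

text \<open>Arm pulled: argmin over Rem of sqrt(hat c_a) N_a (ties towards arm 1;
  if Rem is empty the choice is irrelevant since the algorithm stops next round).\<close>
definition pull_arm :: "(nat \<Rightarrow> nat \<Rightarrow> real) \<Rightarrow> (nat \<Rightarrow> nat) \<Rightarrow> nat set \<Rightarrow> nat" where
  "pull_arm c N Rem =
     (if 1 \<in> Rem \<and> 2 \<in> Rem then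
        (if sqrt (emp c 2 (N 2)) * real (N 2) < sqrt (emp c 1 (N 1)) * real (N 1) then 2 else 1)
      else if 2 \<in> Rem then 2 else 1)"

definition co_step :: "real \<Rightarrow> real \<Rightarrow> real \<Rightarrow> (nat \<Rightarrow> nat \<Rightarrow> real) \<Rightarrow> (nat \<Rightarrow> nat \<Rightarrow> real)
    \<Rightarrow> (nat \<Rightarrow> nat) \<times> nat set \<Rightarrow> (nat \<Rightarrow> nat) \<times> nat set" where
  "co_step \<delta> \<alpha> B r c st =
     (let N = fst st; Rem = snd st; t = real (N 1 + N 2); a0 = best_arm r N;
          Rem' = {a \<in> Rem. \<not> (Zstat r N a0 a > ln (B * t powr \<alpha> / \<delta>))};
          a = pull_arm c N Rem'
      in (N(a := N a + 1), Rem'))"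

definition co_state :: "real \<Rightarrow> real \<Rightarrow> real \<Rightarrow> (nat \<Rightarrow> nat \<Rightarrow> real) \<Rightarrow> (nat \<Rightarrow> nat \<Rightarrow> real)
    \<Rightarrow> nat \<Rightarrow> (nat \<Rightarrow> nat) \<times> nat set" where
  "co_state \<delta> \<alpha> B r c k =
     (co_step \<delta> \<alpha> B r c ^^ k) ((\<lambda>a. if a \<in> {1,2} then 1 else 0), {1,2})"

definition co_stops :: "real \<Rightarrow> real \<Rightarrow> real \<Rightarrow> (nat \<Rightarrow> nat \<Rightarrow> real) \<Rightarrow> (nat \<Rightarrow> nat \<Rightarrow> real)
    \<Rightarrow> nat \<Rightarrow> bool" where
  "co_stops \<delta> \<alpha> B r c k \<longleftrightarrow> card (snd (co_state \<delta> \<alpha> B r c k)) \<le> 1"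

definition total_cost :: "(nat \<Rightarrow> nat \<Rightarrow> real) \<Rightarrow> (nat \<Rightarrow> nat) \<Rightarrow> real" where
  "total_cost c N = (\<Sum>a\<in>{1,2}. \<Sum>k<N a. c a k)"

definition co_J_tau :: "real \<Rightarrow> real \<Rightarrow> real \<Rightarrow> (nat \<Rightarrow> nat \<Rightarrow> real) \<Rightarrow> (nat \<Rightarrow> nat \<Rightarrow> real) \<Rightarrow> ereal" where
  "co_J_tau \<delta> \<alpha> B r c =
     (if \<exists>k. co_stops \<delta> \<alpha> B r c k
      then ereal (total_cost c (fst (co_state \<delta> \<alpha> B r c (LEAST k. co_stops \<delta> \<alpha> B r c k))))
      else \<infinity>)"

end

theory Submission
  imports Defs "HOL-Real_Asymp.Real_Asymp"
begin

text \<open>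
  Fix a sample path on which all empirical means converge; almost every path is such by the
  strong law of large numbers (proved via Borel--Cantelli from Hoeffding's inequality for the
  bounded costs and from a fourth-moment bound for the Gaussian rewards).

  Before the first elimination the algorithm pulls the arm with the smaller index
  \<open>sqrt (hat c\<^sub>a) N\<^sub>a = sqrt (N\<^sub>a S\<^sub>a)\<close>, where \<open>S\<^sub>a\<close> is the accumulated cost of arm \<open>a\<close>.
  One pull raises an index by at most \<open>1 / sqrt l\<close>, so the two indices never drift apart by
  more than \<open>1 / sqrt l\<close>; hence \<open>N\<^sub>1 / N\<^sub>2 \<rightarrow> sqrt c\<^sub>2 / sqrt c\<^sub>1\<close>.  Along this trajectory the
  total cost \<open>J\<close> and the statistic \<open>Z\<close> both grow linearly in the time \<open>t\<close>, and
  \<open>J / Z \<rightarrow> 2 (sqrt c\<^sub>1 + sqrt c\<^sub>2)\<^sup>2 / (\<mu>\<^sub>1 - \<mu>\<^sub>2)\<^sup>2\<close>.  As long as no arm is eliminated,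
  \<open>Z \<le> ln B + \<alpha> ln t + ln (1/\<delta>)\<close>, which forces \<open>t = O(ln (1/\<delta>))\<close>; so the term \<open>\<alpha> ln t\<close> is
  negligible and \<open>J(\<tau>\<^sub>\<delta>) \<le> (\<rho> + o(1)) ln (1/\<delta>)\<close>, where \<open>\<rho>\<close> is the limit of \<open>J / Z\<close>.
  This is the claimed bound without the factor \<open>\<alpha>\<close>.
\<close>

section \<open>Elementary estimates\<close>

lemma abs_diff_le_if_smaller_grows:
  fixes u v :: "nat \<Rightarrow> real"
  assumes "\<And>k. u k \<le> v k \<Longrightarrow> u k \<le> u (Suc k) \<and> u (Suc k) \<le> u k + D \<and> v (Suc k) = v k"
    and "\<And>k. v k < u k \<Longrightarrow> v k \<le> v (Suc k) \<and> v (Suc k) \<le> v k + D \<and> u (Suc k) = u k"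
  shows "\<bar>u k - v k\<bar> \<le> max \<bar>u 0 - v 0\<bar> D"
proof (induction k)
  case (Suc k)
  show ?case
  proof (cases "u k \<le> v k")
    case True
    then show ?thesis using assms(1)[OF True] Suc by auto
  next
    case False
    then show ?thesis using assms(2)[of k] Suc by auto
  qed
qed simp

lemma sqrt_sum_mult_bounds:
  fixes y :: "nat \<Rightarrow> real"
  assumes "\<And>k. y k \<in> {l..1}" "0 \<le> l"
  shows "sqrt l * real n \<le> sqrt (real n * (\<Sum>k<n. y k))"
    and "sqrt (real n * (\<Sum>k<n. y k)) \<le> real n"
proof -
  have "real n * l \<le> (\<Sum>k<n. y k)" "(\<Sum>k<n. y k) \<le> real n"
    using sum_bounded_below[of "{..<n}" l y] sum_bounded_above[of "{..<n}" y 1] assms(1) by auto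
  then have lo: "real n * real n * l \<le> real n * (\<Sum>k<n. y k)"
    and hi: "real n * (\<Sum>k<n. y k) \<le> real n * real n"
    by (simp_all add: mult_left_mono mult.assoc)
  show "sqrt l * real n \<le> sqrt (real n * (\<Sum>k<n. y k))"
    using real_sqrt_le_mono[OF lo] by (simp add: real_sqrt_mult mult.commute)
  show "sqrt (real n * (\<Sum>k<n. y k)) \<le> real n"
    using real_sqrt_le_mono[OF hi] by simp
qed

text \<open>The squares differ by at most \<open>2n + 1\<close>, while the sum of the two roots is at least
  \<open>(2n + 1) sqrt l\<close>.\<close>
lemma sqrt_sum_mult_Suc:
  fixes y :: "nat \<Rightarrow> real"
  assumes "\<And>k. y k \<in> {l..1}" "0 < l"
  shows "sqrt (real n * (\<Sum>k<n. y k)) \<le> sqrt (real (Suc n) * (\<Sum>k<Suc n. y k))"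
    and "sqrt (real (Suc n) * (\<Sum>k<Suc n. y k)) \<le> sqrt (real n * (\<Sum>k<n. y k)) + 1 / sqrt l"
proof -
  define p where "p = sqrt (real n * (\<Sum>k<n. y k))"
  define q where "q = sqrt (real (Suc n) * (\<Sum>k<Suc n. y k))"
  have y_n: "0 \<le> y n" "y n \<le> 1"
    using assms(1)[of n] assms(2) by auto
  have sum: "0 \<le> (\<Sum>k<n. y k)" "(\<Sum>k<n. y k) \<le> real n"
    using sum_bounded_above[of "{..<n}" y 1] assms by (auto intro!: sum_nonneg intro: order_trans[of 0 l])
  then have "real n * (\<Sum>k<n. y k) \<le> real (Suc n) * (\<Sum>k<Suc n. y k)"
    using y_n by (intro mult_mono) auto
  then show "sqrt (real n * (\<Sum>k<n. y k)) \<le> sqrt (real (Suc n) * (\<Sum>k<Suc n. y k))"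
    by (rule real_sqrt_le_mono)
  then have "p \<le> q"
    unfolding p_def q_def .
  have "q\<^sup>2 - p\<^sup>2 = (\<Sum>k<n. y k) + real (Suc n) * y n"
    using sum(1) y_n by (simp add: p_def q_def algebra_simps)
  also have "\<dots> \<le> real n + real (Suc n) * 1"
    using sum(2) y_n by (intro add_mono mult_left_mono) auto
  finally have "(q - p) * (q + p) \<le> 2 * real n + 1"
    by (simp add: power2_eq_square algebra_simps)
  moreover have "sqrt l * real n \<le> p" "sqrt l * real (Suc n) \<le> q"
    unfolding p_def q_def using sqrt_sum_mult_bounds(1) assms less_imp_le by blast+
  then have "sqrt l * (2 * real n + 1) \<le> q + p"
    by (simp add: algebra_simps)
  ultimately have "(q - p) * (sqrt l * (2 * real n + 1)) \<le> 2 * real n + 1"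
    using \<open>p \<le> q\<close> by (smt (verit) mult_left_mono)
  then have "(q - p) * sqrt l \<le> 1"
    by (simp add: mult.assoc[symmetric] mult_le_cancel_right_pos[of "2 * real n + 1" _ 1])
  then have "q - p \<le> 1 / sqrt l"
    using assms(2) by (simp add: le_divide_eq)
  then show "sqrt (real (Suc n) * (\<Sum>k<Suc n. y k)) \<le> sqrt (real n * (\<Sum>k<n. y k)) + 1 / sqrt l"
    unfolding p_def q_def by linarith
qed

lemma ln_le_linear:
  fixes a x :: real
  assumes "0 < a" "0 < x"
  shows "ln x \<le> a * x - ln a - 1"
  using ln_le_minus_one[of "a * x"] assms by (simp add: ln_mult)

lemma le_of_below_log_threshold:
  fixes t z \<alpha> b L :: real
  assumes "0 < z" "0 < \<alpha>" "0 < t" "z / 2 * t \<le> Z" "Z \<le> b + \<alpha> * ln t + L"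
  shows "t \<le> 4 / z * (b + \<alpha> * (- ln (z / (4 * \<alpha>)) - 1) + L)"
proof -
  have "\<alpha> * ln t \<le> \<alpha> * (z / (4 * \<alpha>) * t - ln (z / (4 * \<alpha>)) - 1)"
    using ln_le_linear[of "z / (4 * \<alpha>)" t] assms by (intro mult_left_mono) auto
  also have "\<dots> = z / 4 * t + \<alpha> * (- ln (z / (4 * \<alpha>)) - 1)"
    using assms(2) by (simp add: field_simps)
  finally have "z / 4 * t \<le> b + \<alpha> * (- ln (z / (4 * \<alpha>)) - 1) + L"
    using assms(4,5) by linarith
  then show ?thesis
    using assms(1) by (simp add: field_simps)
qed

lemma ex_above_log_threshold:
  fixes Z :: "nat \<Rightarrow> real"
  assumes "(\<lambda>k. Z k / real (k + 2)) \<longlonglongrightarrow> z" "0 < z"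
  shows "\<exists>k. b + \<alpha> * ln (real (k + 2)) + L < Z k"
proof -
  have "(\<lambda>k. (b + \<alpha> * ln (real (k + 2)) + L) / real (k + 2)) \<longlonglongrightarrow> 0"
    by real_asymp
  then have "(\<lambda>k. Z k / real (k + 2) - (b + \<alpha> * ln (real (k + 2)) + L) / real (k + 2)) \<longlonglongrightarrow> z - 0"
    by (intro tendsto_diff assms(1))
  then have "eventually (\<lambda>k. 0 < Z k / real (k + 2) - (b + \<alpha> * ln (real (k + 2)) + L) / real (k + 2))
      sequentially"
    using assms(2) by (intro order_tendstoD(1)) auto
  then obtain k where "0 < Z k / real (k + 2) - (b + \<alpha> * ln (real (k + 2)) + L) / real (k + 2)"
    by (auto simp: eventually_sequentially)
  then show ?thesis
    by (auto simp: diff_divide_distrib[symmetric] zero_less_divide_iff)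
qed

lemma eventually_le_mult_of_ratio_limits:
  fixes J Z :: "nat \<Rightarrow> real"
  assumes J: "(\<lambda>k. J k / real (k + 2)) \<longlonglongrightarrow> j" and Z: "(\<lambda>k. Z k / real (k + 2)) \<longlonglongrightarrow> z"
    and "0 < z" "j / z < \<rho>"
  shows "eventually (\<lambda>k. J k \<le> \<rho> * Z k \<and> z / 2 * real (k + 2) \<le> Z k) sequentially"
proof -
  have "j - \<rho> * z < 0"
    using assms(3,4) by (simp add: field_simps)
  then have "eventually (\<lambda>k. J k / real (k + 2) - \<rho> * (Z k / real (k + 2)) < 0) sequentially"
    by (intro order_tendstoD(2)[OF tendsto_diff[OF J tendsto_mult[OF tendsto_const Z]]])
  moreover have "eventually (\<lambda>k. z / 2 < Z k / real (k + 2)) sequentially"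
    using assms(3) by (intro order_tendstoD(1)[OF Z]) simp
  ultimately show ?thesis
  proof eventually_elim
    case (elim k)
    have "J k / real (k + 2) - \<rho> * (Z k / real (k + 2)) = (J k - \<rho> * Z k) / real (k + 2)"
      by (simp add: diff_divide_distrib)
    then show ?case
      using elim by (simp add: divide_less_0_iff less_divide_eq)
  qed
qed

text \<open>Below the threshold \<open>Z k\<close> is at most linear in \<open>L\<close>, hence so is \<open>k\<close>, and the
  logarithmic part of the threshold is \<open>o(L)\<close>.\<close>
lemma eventually_le_below_log_threshold:
  fixes J Z :: "nat \<Rightarrow> real"
  assumes J: "(\<lambda>k. J k / real (k + 2)) \<longlonglongrightarrow> j" and Z: "(\<lambda>k. Z k / real (k + 2)) \<longlonglongrightarrow> z"
    and "0 \<le> j" "0 < z" "j / z < \<rho>" "0 < \<alpha>"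
  shows "eventually (\<lambda>L. \<forall>k. Z k \<le> b + \<alpha> * ln (real (k + 2)) + L \<longrightarrow> J k + 2 \<le> \<rho> * L) at_top"
proof -
  obtain \<rho>' where \<rho>': "j / z < \<rho>'" "\<rho>' < \<rho>"
    using dense[OF assms(5)] by blast
  have "0 < \<rho>'"
    using \<rho>'(1) assms(3,4) by (smt (verit) divide_nonneg_pos)
  obtain K where K: "\<And>k. K \<le> k \<Longrightarrow> J k \<le> \<rho>' * Z k \<and> z / 2 * real (k + 2) \<le> Z k"
    using eventually_le_mult_of_ratio_limits[OF J Z assms(4) \<rho>'(1)]
    by (auto simp: eventually_sequentially)
  define T where "T L = 4 / z * (b + \<alpha> * (- ln (z / (4 * \<alpha>)) - 1) + L)" for L
  have late: "J k \<le> \<rho>' * (b + \<alpha> * ln (T L) + L)"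
    if "K \<le> k" "Z k \<le> b + \<alpha> * ln (real (k + 2)) + L" for k L
  proof -
    have "real (k + 2) \<le> T L"
      unfolding T_def using K[OF that(1)] that(2) assms(4,6)
      by (intro le_of_below_log_threshold) auto
    then have "ln (real (k + 2)) \<le> ln (T L)"
      by simp
    then show ?thesis
      using K[OF that(1)] that(2) \<open>0 < \<rho>'\<close> assms(6)
      by (smt (verit) mult_left_mono)
  qed
  have early: "J k \<le> (\<Sum>i<K. \<bar>J i\<bar>)" if "k < K" for k
    using member_le_sum[of k "{..<K}" "\<lambda>i. \<bar>J i\<bar>"] that by auto
  have "eventually (\<lambda>L. \<rho>' * (b + \<alpha> * ln (T L) + L) + 2 \<le> \<rho> * L) at_top"
    using \<rho>' \<open>0 < \<rho>'\<close> assms(4,6) unfolding T_def by real_asymp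
  moreover have "eventually (\<lambda>L. (\<Sum>i<K. \<bar>J i\<bar>) + 2 \<le> \<rho> * L) at_top"
    using eventually_ge_at_top[of "((\<Sum>i<K. \<bar>J i\<bar>) + 2) / \<rho>"]
    by eventually_elim (use \<rho>' \<open>0 < \<rho>'\<close> in \<open>simp add: pos_divide_le_eq mult.commute\<close>)
  ultimately show ?thesis
  proof eventually_elim
    case (elim L)
    show ?case
      using late[of _ L] early elim by (meson add_le_cancel_right not_le order_trans)
  qed
qed

lemma weighted_dG_mean:
  fixes p q x y :: real
  assumes "0 < p + q"
  shows "p * dG x ((p * x + q * y) / (p + q)) + q * dG y ((p * x + q * y) / (p + q))
    = p * q / (p + q) * dG x y"
proof -
  define s where "s = p + q"
  have "s \<noteq> 0"
    using assms by (simp add: s_def)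
  have e: "x - (p * x + q * y) / s = q * (x - y) / s" "y - (p * x + q * y) / s = - (p * (x - y) / s)"
    using \<open>s \<noteq> 0\<close> by (simp_all add: s_def field_simps)
  have "p * dG x ((p * x + q * y) / s) + q * dG y ((p * x + q * y) / s)
      = (p * q\<^sup>2 + q * p\<^sup>2) / s\<^sup>2 * dG x y"
    unfolding dG_def e by (simp add: power_divide power_mult_distrib add_divide_distrib distrib_right)
  also have "p * q\<^sup>2 + q * p\<^sup>2 = p * q * s"
    by (simp add: s_def power2_eq_square algebra_simps)
  finally show ?thesis
    using \<open>s \<noteq> 0\<close> by (simp add: s_def power2_eq_square)
qed

section \<open>The algorithm before the first elimination\<close>

definition pull_index :: "(nat \<Rightarrow> nat \<Rightarrow> real) \<Rightarrow> nat \<Rightarrow> nat \<Rightarrow> real" where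
  "pull_index c a n = sqrt (emp c a n) * real n"

text \<open>The pull counts of the run in which the elimination test is ignored.\<close>
definition co_counts :: "(nat \<Rightarrow> nat \<Rightarrow> real) \<Rightarrow> nat \<Rightarrow> nat \<Rightarrow> nat" where
  "co_counts c k =
     ((\<lambda>N. N(pull_arm c N {1,2} := N (pull_arm c N {1,2}) + 1)) ^^ k) (\<lambda>a. if a \<in> {1,2} then 1 else 0)"

definition keeps_both :: "real \<Rightarrow> real \<Rightarrow> real \<Rightarrow> (nat \<Rightarrow> nat \<Rightarrow> real) \<Rightarrow> (nat \<Rightarrow> nat) \<Rightarrow> bool" where
  "keeps_both \<delta> \<alpha> B r N \<longleftrightarrow> Zstat r N 1 2 \<le> ln (B * real (N 1 + N 2) powr \<alpha> / \<delta>)"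

lemma sqrt_emp_mult: "sqrt (emp x a n) * real n = sqrt (real n * (\<Sum>k<n. x a k))"
proof (cases "n = 0")
  case False
  then have "sqrt (emp x a n) * real n = sqrt (emp x a n * (real n)\<^sup>2)"
    by (simp add: real_sqrt_mult)
  then show ?thesis
    using False by (simp add: emp_def power2_eq_square mult.commute)
qed simp

lemma pull_arm_both:
  "pull_arm c N {1,2} = (if pull_index c 2 (N 2) < pull_index c 1 (N 1) then 2 else 1)"
  by (simp add: pull_arm_def pull_index_def)

lemma pull_arm_in: "pull_arm c N Rem \<in> {1,2}"
  by (simp add: pull_arm_def)

lemma co_counts_0: "co_counts c 0 = (\<lambda>a. if a \<in> {1,2} then 1 else 0)"
  by (simp add: co_counts_def)

lemma co_counts_Suc:
  "co_counts c (Suc k) = (co_counts c k)(pull_arm c (co_counts c k) {1,2} :=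
     co_counts c k (pull_arm c (co_counts c k) {1,2}) + 1)"
  by (simp add: co_counts_def)

lemma co_counts_Suc_apply:
  "co_counts c (Suc k) a = co_counts c k a + (if a = pull_arm c (co_counts c k) {1,2} then 1 else 0)"
  by (simp add: co_counts_Suc)

lemma co_counts_Suc_cases:
  shows "pull_index c 1 (co_counts c k 1) \<le> pull_index c 2 (co_counts c k 2) \<Longrightarrow>
      co_counts c (Suc k) 1 = Suc (co_counts c k 1) \<and> co_counts c (Suc k) 2 = co_counts c k 2"
    and "pull_index c 2 (co_counts c k 2) < pull_index c 1 (co_counts c k 1) \<Longrightarrow>
      co_counts c (Suc k) 2 = Suc (co_counts c k 2) \<and> co_counts c (Suc k) 1 = co_counts c k 1"
  unfolding co_counts_Suc_apply pull_arm_both by simp_all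

lemma co_counts_sum: "co_counts c k 1 + co_counts c k 2 = k + 2"
  by (induction k) (auto simp: co_counts_0 co_counts_Suc_apply pull_arm_def)

lemma co_counts_pos: "a \<in> {1,2} \<Longrightarrow> 0 < co_counts c k a"
  by (induction k) (auto simp: co_counts_0 co_counts_Suc_apply)

lemma total_cost_incr:
  "a \<in> {1,2} \<Longrightarrow> total_cost c (N(a := N a + 1)) = total_cost c N + c a (N a)"
  by (auto simp: total_cost_def)

lemma total_cost_co_counts_Suc:
  assumes "\<And>a k. a \<in> {1,2} \<Longrightarrow> c a k \<le> 1"
  shows "total_cost c (co_counts c (Suc k)) \<le> total_cost c (co_counts c k) + 1"
  using total_cost_incr[OF pull_arm_in] assms[OF pull_arm_in] by (simp add: co_counts_Suc)

lemma total_cost_eq: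
  assumes "0 < N 1" "0 < N 2"
  shows "total_cost c N = real (N 1) * emp c 1 (N 1) + real (N 2) * emp c 2 (N 2)"
  using assms by (simp add: total_cost_def emp_def)

lemma Zstat_eq:
  assumes "0 < N 1" "0 < N 2"
  shows "Zstat r N 1 2 =
    real (N 1) * real (N 2) / real (N 1 + N 2) * dG (emp r 1 (N 1)) (emp r 2 (N 2))"
  using weighted_dG_mean[of "real (N 1)" "real (N 2)"] assms by (simp add: Zstat_def Let_def)

lemma elimination_set:
  assumes "0 < N 1" "0 < N 2" "0 \<le> \<theta>"
  shows "{a \<in> {1,2}. \<not> \<theta> < Zstat r N (best_arm r N) a} =
     (if Zstat r N 1 2 \<le> \<theta> then {1,2} else {best_arm r N})"
proof -
  have "Zstat r N a a = 0" if "0 < N a" for a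
    using that by (simp add: Zstat_def dG_def Let_def field_simps)
  moreover have "Zstat r N 2 1 = Zstat r N 1 2"
    by (simp add: Zstat_def Let_def add.commute)
  ultimately show ?thesis
    using assms by (auto simp: best_arm_def)
qed

lemma ln_threshold_nonneg:
  fixes t :: real
  assumes "0 < \<delta>" "\<delta> \<le> B" "0 \<le> \<alpha>" "1 \<le> t"
  shows "0 \<le> ln (B * t powr \<alpha> / \<delta>)"
proof -
  have "B * 1 \<le> B * t powr \<alpha>"
    using assms ge_one_powr_ge_zero[of t \<alpha>] by (intro mult_left_mono) auto
  then have "\<delta> \<le> B * t powr \<alpha>"
    using assms(2) by linarith
  then show ?thesis
    using assms(1) by (simp add: divide_simps)
qed

lemma keeps_both_iff:
  assumes "0 < B" "0 < \<delta>" "0 < N 1 + N 2"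
  shows "keeps_both \<delta> \<alpha> B r N \<longleftrightarrow> Zstat r N 1 2 \<le> ln B + \<alpha> * ln (real (N 1 + N 2)) + ln (1 / \<delta>)"
proof -
  have "0 < real (N 1 + N 2)"
    using assms(3) by (simp only: of_nat_0_less_iff)
  then show ?thesis
    using assms(1,2) unfolding keeps_both_def by (simp add: ln_mult ln_div del: of_nat_add)
qed

lemma co_step_co_counts:
  fixes c :: "nat \<Rightarrow> nat \<Rightarrow> real" and k :: nat
  assumes "0 < \<delta>" "\<delta> \<le> B" "0 \<le> \<alpha>"
  defines "N \<equiv> co_counts c k"
  shows "co_step \<delta> \<alpha> B r c (N, {1,2}) =
     (if keeps_both \<delta> \<alpha> B r N then (co_counts c (Suc k), {1,2})
      else (N(pull_arm c N {best_arm r N} := N (pull_arm c N {best_arm r N}) + 1), {best_arm r N}))"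
proof -
  have "0 \<le> ln (B * real (N 1 + N 2) powr \<alpha> / \<delta>)"
    using ln_threshold_nonneg[OF assms(1-3)] co_counts_pos[of 1 c k] unfolding N_def by simp
  then show ?thesis
    using elimination_set[of N] co_counts_pos[of _ c k]
    by (simp add: co_step_def keeps_both_def Let_def co_counts_Suc N_def)
qed

lemma co_state_co_counts:
  assumes "0 < \<delta>" "\<delta> \<le> B" "0 \<le> \<alpha>" "\<forall>j<k. keeps_both \<delta> \<alpha> B r (co_counts c j)"
  shows "co_state \<delta> \<alpha> B r c k = (co_counts c k, {1,2})"
  using assms(4)
proof (induction k)
  case 0
  then show ?case
    by (simp add: co_state_def co_counts_0)
next
  case (Suc k)
  have "co_state \<delta> \<alpha> B r c (Suc k) = co_step \<delta> \<alpha> B r c (co_state \<delta> \<alpha> B r c k)"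
    by (simp add: co_state_def)
  also have "\<dots> = co_step \<delta> \<alpha> B r c (co_counts c k, {1,2})"
    using Suc by simp
  finally show ?case
    using co_step_co_counts[OF assms(1-3), where c=c and k=k and r=r] Suc.prems by simp
qed

lemma co_J_tau_at_elimination:
  assumes "0 < \<delta>" "\<delta> \<le> B" "0 \<le> \<alpha>"
    and before: "\<forall>j<k. keeps_both \<delta> \<alpha> B r (co_counts c j)"
    and elim: "\<not> keeps_both \<delta> \<alpha> B r (co_counts c k)"
  shows "\<exists>a\<in>{1,2}. co_J_tau \<delta> \<alpha> B r c = ereal (total_cost c ((co_counts c k)(a := co_counts c k a + 1)))"
proof -
  define N where "N = co_counts c k"
  define a where "a = pull_arm c N {best_arm r N}"
  have state: "co_state \<delta> \<alpha> B r c (Suc k) = (N(a := N a + 1), {best_arm r N})"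
    using co_state_co_counts[OF assms(1-3) before] elim
      co_step_co_counts[OF assms(1-3), where c=c and k=k and r=r]
    by (simp add: co_state_def N_def a_def)
  then have stops: "co_stops \<delta> \<alpha> B r c (Suc k)"
    by (simp add: co_stops_def)
  have "(LEAST k'. co_stops \<delta> \<alpha> B r c k') = Suc k"
  proof (rule Least_equality)
    fix k' assume stops': "co_stops \<delta> \<alpha> B r c k'"
    show "Suc k \<le> k'"
    proof (rule ccontr)
      assume "\<not> Suc k \<le> k'"
      then have "co_state \<delta> \<alpha> B r c k' = (co_counts c k', {1,2})"
        using before by (intro co_state_co_counts[OF assms(1-3)]) auto
      then show False
        using stops' by (simp add: co_stops_def)
    qed
  qed (rule stops)
  then have "co_J_tau \<delta> \<alpha> B r c = ereal (total_cost c (N(a := N a + 1)))"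
    using stops state by (auto simp: co_J_tau_def)
  moreover have "a \<in> {1,2}"
    unfolding a_def by (rule pull_arm_in)
  ultimately show ?thesis
    unfolding N_def by blast
qed

text \<open>The \<open>+ 2\<close> pays for the pull in the round of the elimination and for the last pull
  before it.\<close>
lemma co_J_tau_le_cost_before_elimination:
  assumes "0 < \<delta>" "\<delta> \<le> B" "0 \<le> \<alpha>" and cost_le: "\<And>a k. a \<in> {1,2} \<Longrightarrow> c a k \<le> 1"
    and "keeps_both \<delta> \<alpha> B r (co_counts c 0)" "\<not> keeps_both \<delta> \<alpha> B r (co_counts c k)"
  shows "\<exists>j. keeps_both \<delta> \<alpha> B r (co_counts c j) \<and>
     co_J_tau \<delta> \<alpha> B r c \<le> ereal (total_cost c (co_counts c j) + 2)"
proof -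
  define ks where "ks = (LEAST k. \<not> keeps_both \<delta> \<alpha> B r (co_counts c k))"
  have elim: "\<not> keeps_both \<delta> \<alpha> B r (co_counts c ks)"
    unfolding ks_def by (rule LeastI[of _ k]) (rule assms(6))
  have before: "\<forall>j<ks. keeps_both \<delta> \<alpha> B r (co_counts c j)"
    unfolding ks_def using not_less_Least by blast
  obtain j where ks: "ks = Suc j"
    using assms(5) elim by (cases ks) auto
  obtain a where "a \<in> {1,2}"
    and "co_J_tau \<delta> \<alpha> B r c = ereal (total_cost c ((co_counts c ks)(a := co_counts c ks a + 1)))"
    using co_J_tau_at_elimination[OF assms(1-3) before elim] by blast
  then have "co_J_tau \<delta> \<alpha> B r c \<le> ereal (total_cost c (co_counts c ks) + 1)"
    using total_cost_incr cost_le by simp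
  also have "\<dots> \<le> ereal (total_cost c (co_counts c j) + 2)"
    using total_cost_co_counts_Suc[of c j, OF cost_le] by (simp add: ks)
  finally show ?thesis
    using before ks by blast
qed

section \<open>Asymptotics along a sample path\<close>

locale co_sample_path =
  fixes c r :: "nat \<Rightarrow> nat \<Rightarrow> real" and cbar \<mu> :: "nat \<Rightarrow> real" and l :: real
  assumes l_pos: "0 < l"
    and cost_bounds: "\<And>a k. a \<in> {1,2} \<Longrightarrow> c a k \<in> {l..1}"
    and emp_cost_tendsto: "\<And>a. a \<in> {1,2} \<Longrightarrow> (\<lambda>n. emp c a n) \<longlonglongrightarrow> cbar a"
    and emp_reward_tendsto: "\<And>a. a \<in> {1,2} \<Longrightarrow> (\<lambda>n. emp r a n) \<longlonglongrightarrow> \<mu> a"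
begin

abbreviation N :: "nat \<Rightarrow> nat \<Rightarrow> nat" where
  "N \<equiv> co_counts c"

lemma emp_cost_bounds:
  assumes "a \<in> {1,2}" "0 < n"
  shows "l \<le> emp c a n" "emp c a n \<le> 1"
  using sum_bounded_below[of "{..<n}" l "c a"] sum_bounded_above[of "{..<n}" "c a" 1]
    cost_bounds[OF assms(1)] assms(2)
  by (auto simp: emp_def field_simps)

lemma cbar_bounds:
  assumes "a \<in> {1,2}"
  shows "l \<le> cbar a" "cbar a \<le> 1"
proof -
  have "eventually (\<lambda>n. l \<le> emp c a n \<and> emp c a n \<le> 1) sequentially"
    using eventually_gt_at_top[of 0] by eventually_elim (use emp_cost_bounds[OF assms] in auto)
  then have "eventually (\<lambda>n. l \<le> emp c a n) sequentially" "eventually (\<lambda>n. emp c a n \<le> 1) sequentially"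
    by (auto elim: eventually_mono)
  then show "l \<le> cbar a" "cbar a \<le> 1"
    by (auto intro: tendsto_lowerbound[OF emp_cost_tendsto[OF assms]]
        tendsto_upperbound[OF emp_cost_tendsto[OF assms]])
qed

lemma pull_index_bounds:
  assumes "a \<in> {1,2}"
  shows "sqrt l * real n \<le> pull_index c a n" "pull_index c a n \<le> real n"
  using sqrt_sum_mult_bounds[of "c a" l n] cost_bounds[OF assms] l_pos
  by (simp_all add: pull_index_def sqrt_emp_mult)

lemma pull_index_Suc:
  assumes "a \<in> {1,2}"
  shows "pull_index c a n \<le> pull_index c a (Suc n)"
    and "pull_index c a (Suc n) \<le> pull_index c a n + 1 / sqrt l"
  using sqrt_sum_mult_Suc[of "c a" l n] cost_bounds[OF assms] l_pos
  by (simp_all add: pull_index_def sqrt_emp_mult del: sum.lessThan_Suc of_nat_Suc)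

lemma pull_index_gap: "\<bar>pull_index c 1 (N k 1) - pull_index c 2 (N k 2)\<bar> \<le> 1 / sqrt l"
proof -
  have "sqrt l \<le> 1"
    using cost_bounds[of 1 0] by simp
  then have "1 \<le> 1 / sqrt l"
    using l_pos by (simp add: le_divide_eq)
  moreover have "\<bar>pull_index c 1 (N 0 1) - pull_index c 2 (N 0 2)\<bar> \<le> 1"
    using pull_index_bounds[of 1 1] pull_index_bounds[of 2 1]
    by (simp add: co_counts_0 abs_le_iff) (use real_sqrt_ge_zero[of l] l_pos in linarith)
  moreover have "\<bar>pull_index c 1 (N k 1) - pull_index c 2 (N k 2)\<bar>
      \<le> max \<bar>pull_index c 1 (N 0 1) - pull_index c 2 (N 0 2)\<bar> (1 / sqrt l)"
    by (rule abs_diff_le_if_smaller_grows)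
      (use pull_index_Suc[of 1] pull_index_Suc[of 2] co_counts_Suc_cases[of c] in auto)
  ultimately show ?thesis
    by linarith
qed

lemma co_counts_lower_bound:
  assumes "a \<in> {1,2}"
  shows "(sqrt l * real (k + 2) - 1 / sqrt l) / 2 \<le> real (N k a)"
proof -
  have "real (k + 2) = real (N k 1) + real (N k 2)"
    using co_counts_sum[of c k] by (metis of_nat_add)
  then have "sqrt l * real (k + 2) \<le> pull_index c 1 (N k 1) + pull_index c 2 (N k 2)"
    using pull_index_bounds(1)[of 1 "N k 1"] pull_index_bounds(1)[of 2 "N k 2"]
    by (simp add: distrib_left)
  then show ?thesis
    using pull_index_gap[of k] pull_index_bounds(2)[of 1 "N k 1"] pull_index_bounds(2)[of 2 "N k 2"] assms
    by auto
qed

lemma co_counts_tendsto: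
  assumes "a \<in> {1,2}"
  shows "filterlim (\<lambda>k. N k a) at_top sequentially"
proof -
  have "filterlim (\<lambda>k. (sqrt l * real (k + 2) - 1 / sqrt l) / 2) at_top sequentially"
    using l_pos by real_asymp
  then have "filterlim (\<lambda>k. real (N k a)) at_top sequentially"
    by (rule filterlim_at_top_mono) (use co_counts_lower_bound[OF assms] in auto)
  then show ?thesis
    unfolding filterlim_at_top by (metis (mono_tags, lifting) eventually_mono of_nat_le_iff)
qed

lemma emp_counts_tendsto:
  assumes "a \<in> {1,2}"
  shows "(\<lambda>k. emp c a (N k a)) \<longlonglongrightarrow> cbar a" "(\<lambda>k. emp r a (N k a)) \<longlonglongrightarrow> \<mu> a"
  using filterlim_compose[OF emp_cost_tendsto[OF assms] co_counts_tendsto[OF assms]]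
    filterlim_compose[OF emp_reward_tendsto[OF assms] co_counts_tendsto[OF assms]]
  by simp_all

lemma pull_index_ratio_tendsto:
  "(\<lambda>k. pull_index c 1 (N k 1) / pull_index c 2 (N k 2)) \<longlonglongrightarrow> 1"
proof (rule LIM_zero_cancel, rule Lim_null_comparison)
  show "eventually (\<lambda>k. norm (pull_index c 1 (N k 1) / pull_index c 2 (N k 2) - 1)
      \<le> 1 / l / real (N k 2)) sequentially"
  proof (rule always_eventually, rule allI)
    fix k
    define u v where "u = pull_index c 1 (N k 1)" and "v = pull_index c 2 (N k 2)"
    have low: "0 < sqrt l * real (N k 2)" "sqrt l * real (N k 2) \<le> v"
      using l_pos co_counts_pos[of 2 c k] pull_index_bounds(1)[of 2 "N k 2"] by (simp_all add: v_def)
    have "norm (u / v - 1) = \<bar>u - v\<bar> / v"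
      using low by (simp add: field_simps)
    also have "\<dots> \<le> 1 / sqrt l / v"
      by (rule divide_right_mono) (use pull_index_gap[of k] low in \<open>auto simp: u_def v_def\<close>)
    also have "\<dots> \<le> 1 / sqrt l / (sqrt l * real (N k 2))"
      using low l_pos by (intro divide_left_mono) auto
    also have "\<dots> = 1 / l / real (N k 2)"
      using l_pos by simp
    finally show "norm (u / v - 1) \<le> 1 / l / real (N k 2)" .
  qed
  show "(\<lambda>k. 1 / l / real (N k 2)) \<longlonglongrightarrow> 0"
    by (intro tendsto_divide_0[OF tendsto_const] filterlim_at_top_imp_at_infinity
        filterlim_compose[OF filterlim_real_sequentially co_counts_tendsto]) simp
qed

lemma co_counts_ratio_tendsto:
  "(\<lambda>k. real (N k 1) / real (N k 2)) \<longlonglongrightarrow> sqrt (cbar 2) / sqrt (cbar 1)"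
proof -
  have "(\<lambda>k. pull_index c 1 (N k 1) / pull_index c 2 (N k 2) *
      (sqrt (emp c 2 (N k 2)) / sqrt (emp c 1 (N k 1)))) \<longlonglongrightarrow> 1 * (sqrt (cbar 2) / sqrt (cbar 1))"
    using cbar_bounds[of 1] l_pos
    by (intro tendsto_intros pull_index_ratio_tendsto emp_counts_tendsto) auto
  moreover have "pull_index c 1 (N k 1) / pull_index c 2 (N k 2) *
      (sqrt (emp c 2 (N k 2)) / sqrt (emp c 1 (N k 1))) = real (N k 1) / real (N k 2)" for k
    using emp_cost_bounds(1)[of 1 "N k 1"] emp_cost_bounds(1)[of 2 "N k 2"] co_counts_pos[of _ c k] l_pos
    by (simp add: pull_index_def field_simps)
  ultimately show ?thesis
    by simp
qed

lemma arm_shares: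
  "real (N k 1) / real (k + 2) = (real (N k 1) / real (N k 2)) / (real (N k 1) / real (N k 2) + 1)"
  "real (N k 2) / real (k + 2) = 1 - real (N k 1) / real (k + 2)"
proof -
  have "real (k + 2) = real (N k 1) + real (N k 2)"
    using co_counts_sum[of c k] by (metis of_nat_add)
  then show "real (N k 1) / real (k + 2) = (real (N k 1) / real (N k 2)) / (real (N k 1) / real (N k 2) + 1)"
      "real (N k 2) / real (k + 2) = 1 - real (N k 1) / real (k + 2)"
    using co_counts_pos[of 2 c k] by (simp_all add: field_simps)
qed

lemma arm1_share_tendsto:
  "(\<lambda>k. real (N k 1) / real (k + 2)) \<longlonglongrightarrow> sqrt (cbar 2) / (sqrt (cbar 1) + sqrt (cbar 2))"
proof -
  have pos: "0 < sqrt (cbar 1)" "0 < sqrt (cbar 2)"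
    using cbar_bounds[of 1] cbar_bounds[of 2] l_pos by auto
  have "(\<lambda>k. (real (N k 1) / real (N k 2)) / (real (N k 1) / real (N k 2) + 1))
      \<longlonglongrightarrow> (sqrt (cbar 2) / sqrt (cbar 1)) / (sqrt (cbar 2) / sqrt (cbar 1) + 1)"
    by (rule tendsto_divide[OF co_counts_ratio_tendsto tendsto_add[OF co_counts_ratio_tendsto tendsto_const]])
      (use pos divide_pos_pos[of "sqrt (cbar 2)" "sqrt (cbar 1)"] in linarith)
  also have "(sqrt (cbar 2) / sqrt (cbar 1)) / (sqrt (cbar 2) / sqrt (cbar 1) + 1)
      = sqrt (cbar 2) / (sqrt (cbar 1) + sqrt (cbar 2))"
    using pos by (simp add: field_simps)
  finally show ?thesis
    by (simp only: arm_shares(1))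
qed

lemma arm2_share_tendsto:
  "(\<lambda>k. real (N k 2) / real (k + 2)) \<longlonglongrightarrow> sqrt (cbar 1) / (sqrt (cbar 1) + sqrt (cbar 2))"
proof -
  have "0 < sqrt (cbar 1) + sqrt (cbar 2)"
    using cbar_bounds[of 1] cbar_bounds[of 2] l_pos by (auto intro: add_pos_pos)
  then have "1 - sqrt (cbar 2) / (sqrt (cbar 1) + sqrt (cbar 2)) = sqrt (cbar 1) / (sqrt (cbar 1) + sqrt (cbar 2))"
    by (simp add: field_simps)
  moreover have "(\<lambda>k. 1 - real (N k 1) / real (k + 2))
      \<longlonglongrightarrow> 1 - sqrt (cbar 2) / (sqrt (cbar 1) + sqrt (cbar 2))"
    by (intro tendsto_diff tendsto_const arm1_share_tendsto)
  ultimately show ?thesis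
    unfolding arm_shares(2) by simp
qed

lemma cost_per_round_tendsto:
  "(\<lambda>k. total_cost c (N k) / real (k + 2)) \<longlonglongrightarrow> sqrt (cbar 1) * sqrt (cbar 2)"
proof -
  define w where "w = (\<lambda>a k. real (N k a) / real (k + 2))"
  define s where "s = (\<lambda>a. sqrt (cbar a))"
  have pos: "0 < s 1" "0 < s 2" and sq: "cbar 1 = (s 1)\<^sup>2" "cbar 2 = (s 2)\<^sup>2"
    using cbar_bounds[of 1] cbar_bounds[of 2] l_pos by (auto simp: s_def)
  have "total_cost c (N k) / real (k + 2) = w 1 k * emp c 1 (N k 1) + w 2 k * emp c 2 (N k 2)" for k
    using total_cost_eq[of "N k" c] co_counts_pos[of _ c k] by (simp add: w_def add_divide_distrib)
  moreover have "(\<lambda>k. w 1 k * emp c 1 (N k 1) + w 2 k * emp c 2 (N k 2))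
      \<longlonglongrightarrow> s 2 / (s 1 + s 2) * cbar 1 + s 1 / (s 1 + s 2) * cbar 2"
    using arm1_share_tendsto arm2_share_tendsto unfolding s_def
    by (intro tendsto_intros emp_counts_tendsto) (auto simp: w_def)
  moreover have "s 2 / (s 1 + s 2) * cbar 1 + s 1 / (s 1 + s 2) * cbar 2 = s 1 * s 2"
    using pos unfolding sq by (simp add: divide_simps) (simp add: algebra_simps power2_eq_square)
  ultimately show ?thesis
    by (simp add: s_def)
qed

lemma Zstat_per_round_tendsto:
  "(\<lambda>k. Zstat r (N k) 1 2 / real (k + 2))
    \<longlonglongrightarrow> sqrt (cbar 1) * sqrt (cbar 2) / (sqrt (cbar 1) + sqrt (cbar 2))\<^sup>2 * dG (\<mu> 1) (\<mu> 2)"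
proof -
  define w where "w = (\<lambda>a k. real (N k a) / real (k + 2))"
  define s where "s = (\<lambda>a. sqrt (cbar a))"
  have "Zstat r (N k) 1 2 / real (k + 2) = w 1 k * w 2 k * dG (emp r 1 (N k 1)) (emp r 2 (N k 2))" for k
  proof -
    have "real (N k 1 + N k 2) = real (k + 2)"
      using co_counts_sum[of c k] by simp
    then show ?thesis
      using Zstat_eq[of "N k" r] co_counts_pos[of _ c k] by (simp add: w_def power2_eq_square)
  qed
  moreover have "(\<lambda>k. w 1 k * w 2 k * dG (emp r 1 (N k 1)) (emp r 2 (N k 2)))
      \<longlonglongrightarrow> s 2 / (s 1 + s 2) * (s 1 / (s 1 + s 2)) * dG (\<mu> 1) (\<mu> 2)"
    using arm1_share_tendsto arm2_share_tendsto unfolding s_def dG_def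
    by (intro tendsto_intros emp_counts_tendsto) (auto simp: w_def)
  ultimately show ?thesis
    by (simp add: s_def power2_eq_square mult.commute)
qed

lemma Zstat_per_round_limit_pos:
  assumes "\<mu> 1 \<noteq> \<mu> 2"
  shows "0 < sqrt (cbar 1) * sqrt (cbar 2) / (sqrt (cbar 1) + sqrt (cbar 2))\<^sup>2 * dG (\<mu> 1) (\<mu> 2)"
proof -
  have "0 < sqrt (cbar 1)" "0 < sqrt (cbar 2)"
    using cbar_bounds[of 1] cbar_bounds[of 2] l_pos by auto
  then show ?thesis
    using assms by (intro mult_pos_pos divide_pos_pos zero_less_power add_pos_pos) (auto simp: dG_def)
qed

lemma co_J_tau_le_if_below_threshold:
  assumes "0 < \<delta>" "\<delta> \<le> B" "0 < \<alpha>" "\<mu> 1 \<noteq> \<mu> 2"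
    and "Zstat r (N 0) 1 2 \<le> ln B + \<alpha> * ln 2 + ln (1 / \<delta>)"
    and "\<And>k. Zstat r (N k) 1 2 \<le> ln B + \<alpha> * ln (real (k + 2)) + ln (1 / \<delta>) \<Longrightarrow>
      total_cost c (N k) + 2 \<le> \<rho> * ln (1 / \<delta>)"
  shows "co_J_tau \<delta> \<alpha> B r c \<le> ereal (\<rho> * ln (1 / \<delta>))"
proof -
  have keeps: "keeps_both \<delta> \<alpha> B r (N k) \<longleftrightarrow>
      Zstat r (N k) 1 2 \<le> ln B + \<alpha> * ln (real (k + 2)) + ln (1 / \<delta>)" for k
    using keeps_both_iff[of B \<delta> "N k", unfolded co_counts_sum] assms(1,2) by simp
  obtain k where "\<not> keeps_both \<delta> \<alpha> B r (N k)"
    using ex_above_log_threshold[OF Zstat_per_round_tendsto Zstat_per_round_limit_pos[OF assms(4)]]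
    unfolding keeps by (meson not_le)
  moreover have "keeps_both \<delta> \<alpha> B r (N 0)"
    using keeps[of 0] assms(5) by simp
  moreover have "\<And>a k. a \<in> {1,2} \<Longrightarrow> c a k \<le> 1"
    using cost_bounds by auto
  ultimately obtain j where "keeps_both \<delta> \<alpha> B r (N j)"
    and "co_J_tau \<delta> \<alpha> B r c \<le> ereal (total_cost c (N j) + 2)"
    using co_J_tau_le_cost_before_elimination[OF assms(1,2)] assms(3) by (metis less_imp_le)
  then show ?thesis
    using assms(6)[of j] keeps[of j] by (simp add: order_trans)
qed

lemma eventually_co_J_tau_le:
  assumes "0 < \<alpha>" "0 < B" "\<mu> 1 \<noteq> \<mu> 2"
    and "2 * (sqrt (cbar 1) + sqrt (cbar 2))\<^sup>2 / (\<mu> 1 - \<mu> 2)\<^sup>2 < \<rho>"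
  shows "eventually (\<lambda>\<delta>. co_J_tau \<delta> \<alpha> B r c / ereal (ln (1 / \<delta>)) \<le> ereal \<rho>) (at_right 0)"
proof -
  define s where "s = (\<lambda>a. sqrt (cbar a))"
  have "0 < s 1" "0 < s 2" "0 < (\<mu> 1 - \<mu> 2)\<^sup>2"
    using cbar_bounds[of 1] cbar_bounds[of 2] l_pos assms(3) by (auto simp: s_def)
  then have "s 1 * s 2 / (s 1 * s 2 / (s 1 + s 2)\<^sup>2 * dG (\<mu> 1) (\<mu> 2)) = 2 * (s 1 + s 2)\<^sup>2 / (\<mu> 1 - \<mu> 2)\<^sup>2"
    by (simp add: dG_def field_simps)
  with assms(4) have "eventually (\<lambda>L. \<forall>k. Zstat r (N k) 1 2 \<le> ln B + \<alpha> * ln (real (k + 2)) + L \<longrightarrow>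
      total_cost c (N k) + 2 \<le> \<rho> * L) at_top"
    using \<open>0 < s 1\<close> \<open>0 < s 2\<close> assms(1) unfolding s_def
    by (intro eventually_le_below_log_threshold[OF cost_per_round_tendsto Zstat_per_round_tendsto]
        Zstat_per_round_limit_pos[OF assms(3)]) auto
  moreover have "eventually (\<lambda>L. Zstat r (N 0) 1 2 \<le> ln B + \<alpha> * ln 2 + L) at_top"
    using eventually_ge_at_top[of "Zstat r (N 0) 1 2 - ln B - \<alpha> * ln 2"] by eventually_elim simp
  moreover have "eventually (\<lambda>L::real. 0 < L) at_top"
    by (rule eventually_gt_at_top)
  ultimately have "eventually (\<lambda>L. (\<forall>k. Zstat r (N k) 1 2 \<le> ln B + \<alpha> * ln (real (k + 2)) + L \<longrightarrow>
      total_cost c (N k) + 2 \<le> \<rho> * L) \<and> Zstat r (N 0) 1 2 \<le> ln B + \<alpha> * ln 2 + L \<and> 0 < L) at_top"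
    by eventually_elim blast
  moreover have "filterlim (\<lambda>\<delta>::real. ln (1 / \<delta>)) at_top (at_right 0)"
    by real_asymp
  ultimately have "eventually (\<lambda>\<delta>. (\<forall>k. Zstat r (N k) 1 2 \<le> ln B + \<alpha> * ln (real (k + 2)) + ln (1 / \<delta>)
      \<longrightarrow> total_cost c (N k) + 2 \<le> \<rho> * ln (1 / \<delta>)) \<and>
      Zstat r (N 0) 1 2 \<le> ln B + \<alpha> * ln 2 + ln (1 / \<delta>) \<and> 0 < ln (1 / \<delta>)) (at_right 0)"
    by (rule eventually_compose_filterlim)
  with eventually_at_right_real[OF assms(2)] show ?thesis
  proof eventually_elim
    case (elim \<delta>)
    then have "co_J_tau \<delta> \<alpha> B r c \<le> ereal (\<rho> * ln (1 / \<delta>))"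
      using assms by (intro co_J_tau_le_if_below_threshold) auto
    then show ?case
      using elim by (simp add: ereal_divide_le_pos mult.commute)
  qed
qed

lemma Limsup_co_J_tau_le:
  assumes "0 < \<alpha>" "0 < B" "\<mu> 1 \<noteq> \<mu> 2"
  shows "Limsup (at_right 0) (\<lambda>\<delta>. co_J_tau \<delta> \<alpha> B r c / ereal (ln (1 / \<delta>)))
    \<le> ereal (2 * (sqrt (cbar 1) + sqrt (cbar 2))\<^sup>2 / (\<mu> 1 - \<mu> 2)\<^sup>2)"
proof (rule dense_ge)
  fix y assume "ereal (2 * (sqrt (cbar 1) + sqrt (cbar 2))\<^sup>2 / (\<mu> 1 - \<mu> 2)\<^sup>2) < y"
  then obtain \<rho> where "2 * (sqrt (cbar 1) + sqrt (cbar 2))\<^sup>2 / (\<mu> 1 - \<mu> 2)\<^sup>2 < \<rho>" "ereal \<rho> < y"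
    using ereal_dense2 by fastforce
  then show "Limsup (at_right 0) (\<lambda>\<delta>. co_J_tau \<delta> \<alpha> B r c / ereal (ln (1 / \<delta>))) \<le> y"
    using Limsup_bounded[OF eventually_co_J_tau_le[OF assms]] by (meson less_imp_le order_trans)
qed

end

section \<open>Strong laws of large numbers\<close>

lemma (in prob_space) mean_tendsto_if_summable_tails:
  fixes X :: "nat \<Rightarrow> 'a \<Rightarrow> real"
  assumes [measurable]: "\<And>k. X k \<in> borel_measurable M"
    and tails: "\<And>\<epsilon>. 0 < \<epsilon> \<Longrightarrow>
      summable (\<lambda>n. prob {\<omega> \<in> space M. \<epsilon> \<le> \<bar>(\<Sum>k<n. X k \<omega>) / real n - m\<bar>})"
  shows "AE \<omega> in M. (\<lambda>n. (\<Sum>k<n. X k \<omega>) / real n) \<longlonglongrightarrow> m"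
proof -
  have "AE \<omega> in M. \<forall>j::nat. eventually
      (\<lambda>n. \<bar>(\<Sum>k<n. X k \<omega>) / real n - m\<bar> < 1 / real (Suc j)) sequentially"
  proof (subst AE_all_countable, intro allI)
    fix j :: nat
    have "AE \<omega> in M. eventually (\<lambda>n. \<omega> \<in> space M -
        {\<omega> \<in> space M. 1 / real (Suc j) \<le> \<bar>(\<Sum>k<n. X k \<omega>) / real n - m\<bar>}) sequentially"
      by (rule borel_cantelli_AE1) (use tails[of "1 / real (Suc j)"] in \<open>auto simp: emeasure_eq_measure\<close>)
    then show "AE \<omega> in M. eventually
        (\<lambda>n. \<bar>(\<Sum>k<n. X k \<omega>) / real n - m\<bar> < 1 / real (Suc j)) sequentially"
      by (auto elim!: eventually_mono)
  qed
  then show ?thesis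
  proof (rule AE_mp, intro AE_I2 impI)
    fix \<omega> assume ev: "\<forall>j::nat. eventually
        (\<lambda>n. \<bar>(\<Sum>k<n. X k \<omega>) / real n - m\<bar> < 1 / real (Suc j)) sequentially"
    show "(\<lambda>n. (\<Sum>k<n. X k \<omega>) / real n) \<longlonglongrightarrow> m"
    proof (rule LIMSEQ_I)
      fix e :: real assume "0 < e"
      then obtain j where j: "inverse (real (Suc j)) < e"
        using reals_Archimedean by blast
      obtain n0 where "\<And>n. n0 \<le> n \<Longrightarrow> \<bar>(\<Sum>k<n. X k \<omega>) / real n - m\<bar> < 1 / real (Suc j)"
        using ev[rule_format, of j] by (auto simp: eventually_sequentially)
      then show "\<exists>n0. \<forall>n\<ge>n0. norm ((\<Sum>k<n. X k \<omega>) / real n - m) < e"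
        using j by (intro exI[of _ n0] allI impI) (force simp: inverse_eq_divide)
    qed
  qed
qed

text \<open>An i.i.d. sequence is given as \<open>F \<circ> g\<close> with \<open>g\<close> injective into the index set of an
  independent family \<open>F\<close>: the observations of one arm form such a subfamily of all observations.\<close>
lemma (in prob_space) bounded_iid_mean_tail:
  fixes F :: "'i \<Rightarrow> 'a \<Rightarrow> real" and g :: "nat \<Rightarrow> 'i"
  assumes indep: "indep_vars (\<lambda>_. borel) F I" and g: "inj g" "range g \<subseteq> I"
    and ident: "\<And>k. distr M borel (F (g k)) = distr M borel (F (g 0))"
    and bounded: "AE \<omega> in M. F (g 0) \<omega> \<in> {a..b}" and "a < b" "0 < \<epsilon>" "0 < n"
  shows "prob {\<omega> \<in> space M. \<epsilon> \<le> \<bar>(\<Sum>k<n. F (g k) \<omega>) / real n - expectation (F (g 0))\<bar>}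
    \<le> 2 * exp (- 2 * \<epsilon>\<^sup>2 / (b - a)\<^sup>2) ^ n"
proof -
  define J where "J = g ` {..<n}"
  have inj: "inj_on g {..<n}"
    using g(1) by (rule inj_on_subset) simp
  have card: "card J = n"
    unfolding J_def using card_image[OF inj] by simp
  have "Hoeffding_ineq_iid M J F (F (g 0)) a b"
    unfolding Hoeffding_ineq_iid_def iid_interval_bounded_random_variables_def
      iid_interval_bounded_random_variables_axioms_def
  proof (intro conjI ballI)
    show "indep_vars (\<lambda>_. borel) F J"
      using g(2) unfolding J_def by (intro indep_vars_subset[OF indep]) auto
    show "random_variable borel (F (g 0))"
      using indep g(2) unfolding indep_vars_def by auto
  qed (use prob_space_axioms ident bounded in \<open>auto simp: J_def\<close>)
  then have "prob {\<omega> \<in> space M. \<epsilon> \<le> \<bar>(\<Sum>i\<in>J. F i \<omega>) / real (card J) - expectation (F (g 0))\<bar>}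
      \<le> 2 * exp (- 2 * real (card J) * \<epsilon>\<^sup>2 / (b - a)\<^sup>2)"
    by (rule Hoeffding_ineq_iid.Hoeffding_ineq_abs_ge') (use assms(6-8) in \<open>auto simp: J_def\<close>)
  moreover have "(\<Sum>i\<in>J. F i \<omega>) = (\<Sum>k<n. F (g k) \<omega>)" for \<omega>
    unfolding J_def by (simp add: sum.reindex[OF inj])
  moreover have "exp (- 2 * real n * \<epsilon>\<^sup>2 / (b - a)\<^sup>2) = exp (- 2 * \<epsilon>\<^sup>2 / (b - a)\<^sup>2) ^ n"
    using exp_of_nat_mult[of n "- 2 * \<epsilon>\<^sup>2 / (b - a)\<^sup>2"] by (simp add: mult_ac)
  ultimately show ?thesis
    by (simp add: card)
qed

lemma (in prob_space) bounded_iid_slln: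
  fixes F :: "'i \<Rightarrow> 'a \<Rightarrow> real" and g :: "nat \<Rightarrow> 'i"
  assumes indep: "indep_vars (\<lambda>_. borel) F I" and g: "inj g" "range g \<subseteq> I"
    and ident: "\<And>k. distr M borel (F (g k)) = distr M borel (F (g 0))"
    and bounded: "AE \<omega> in M. F (g 0) \<omega> \<in> {a..b}" and "a < b"
  shows "AE \<omega> in M. (\<lambda>n. (\<Sum>k<n. F (g k) \<omega>) / real n) \<longlonglongrightarrow> expectation (F (g 0))"
proof (rule mean_tendsto_if_summable_tails)
  show "F (g k) \<in> borel_measurable M" for k
    using indep g(2) unfolding indep_vars_def by auto
  fix \<epsilon> :: real assume "0 < \<epsilon>"
  have "summable (\<lambda>n. 2 * exp (- 2 * \<epsilon>\<^sup>2 / (b - a)\<^sup>2) ^ n)"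
    using \<open>0 < \<epsilon>\<close> \<open>a < b\<close> by (intro summable_mult summable_geometric) simp
  then show "summable (\<lambda>n. prob {\<omega> \<in> space M.
      \<epsilon> \<le> \<bar>(\<Sum>k<n. F (g k) \<omega>) / real n - expectation (F (g 0))\<bar>})"
    by (rule summable_comparison_test'[where N = 1])
      (use bounded_iid_mean_tail[OF assms \<open>0 < \<epsilon>\<close>] in simp)
qed

lemma (in prob_space) normal_fourth_moment_tail:
  assumes S: "distributed M lborel S (\<lambda>x. ennreal (normal_density m \<sigma> x))" and "0 < \<sigma>" "0 < t"
  shows "prob {\<omega> \<in> space M. t \<le> \<bar>S \<omega> - m\<bar>} \<le> 3 * \<sigma> ^ 4 / t ^ 4"
proof -
  have "fact (2 * 2) / ((2 / \<sigma>\<^sup>2) ^ 2 * fact 2) = 3 * \<sigma> ^ 4"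
    using assms(2) by (simp add: fact_numeral field_simps power2_eq_square power4_eq_xxxx)
  then have moment: "has_bochner_integral lborel (\<lambda>x. normal_density m \<sigma> x * (x - m) ^ 4) (3 * \<sigma> ^ 4)"
    using normal_moment_even[where \<mu>=m and \<sigma>=\<sigma> and k=2] assms(2) by simp
  have g4: "(\<lambda>x. (x - m) ^ 4) \<in> borel_measurable lborel"
    by measurable
  have int: "integrable M (\<lambda>\<omega>. (S \<omega> - m) ^ 4)"
    using distributed_integrable[OF S g4] moment by (simp add: has_bochner_integral_iff)
  have val: "(\<integral>\<omega>. (S \<omega> - m) ^ 4 \<partial>M) = 3 * \<sigma> ^ 4"
    using distributed_integral[OF S g4] moment by (simp add: has_bochner_integral_iff)
  have "t \<le> \<bar>y\<bar> \<longleftrightarrow> t ^ 4 \<le> y ^ 4" for y :: real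
    using power_mono_iff[of t "\<bar>y\<bar>" 4] assms(3) by (simp add: power_even_abs)
  then have "{\<omega> \<in> space M. t \<le> \<bar>S \<omega> - m\<bar>} = {\<omega> \<in> space M. t ^ 4 \<le> (S \<omega> - m) ^ 4}"
    by blast
  also have "prob \<dots> \<le> (\<integral>\<omega>. (S \<omega> - m) ^ 4 \<partial>M) / t ^ 4"
    using assms(3) by (intro integral_Markov_inequality_measure[OF int]) auto
  finally show ?thesis
    by (simp add: val)
qed

lemma (in prob_space) normal_iid_mean_tail:
  fixes F :: "'i \<Rightarrow> 'a \<Rightarrow> real" and g :: "nat \<Rightarrow> 'i"
  assumes indep: "indep_vars (\<lambda>_. borel) F I" and g: "inj g" "range g \<subseteq> I"
    and normal: "\<And>k. distributed M lborel (F (g k)) (\<lambda>x. ennreal (normal_density m \<sigma> x))"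
    and "0 < \<sigma>" "0 < \<epsilon>" "0 < n"
  shows "prob {\<omega> \<in> space M. \<epsilon> \<le> \<bar>(\<Sum>k<n. F (g k) \<omega>) / real n - m\<bar>}
    \<le> 3 * \<sigma> ^ 4 / \<epsilon> ^ 4 * inverse (real n ^ 2)"
proof -
  define J where "J = g ` {..<n}"
  have inj: "inj_on g {..<n}"
    using g(1) by (rule inj_on_subset) simp
  have "distributed M lborel (\<lambda>\<omega>. \<Sum>i\<in>J. F i \<omega>)
      (\<lambda>x. ennreal (normal_density (\<Sum>i\<in>J. m) (sqrt (\<Sum>i\<in>J. \<sigma>\<^sup>2)) x))"
    using g(2) normal assms(5,7) unfolding J_def
    by (intro sum_indep_normal indep_vars_subset[OF indep]) auto
  then have sum: "distributed M lborel (\<lambda>\<omega>. \<Sum>k<n. F (g k) \<omega>)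
      (\<lambda>x. ennreal (normal_density (real n * m) (sqrt (real n) * \<sigma>) x))"
    using assms(5) by (simp add: J_def sum.reindex[OF inj] card_image[OF inj] real_sqrt_mult)
  have "{\<omega> \<in> space M. \<epsilon> \<le> \<bar>(\<Sum>k<n. F (g k) \<omega>) / real n - m\<bar>}
      = {\<omega> \<in> space M. real n * \<epsilon> \<le> \<bar>(\<Sum>k<n. F (g k) \<omega>) - real n * m\<bar>}"
  proof -
    have "x / real n - m = (x - real n * m) / real n" for x
      using assms(7) by (simp add: field_simps)
    then have "\<bar>x / real n - m\<bar> = \<bar>x - real n * m\<bar> / real n" for x
      by simp
    then show ?thesis
      using assms(7) by (simp add: pos_le_divide_eq mult.commute)
  qed
  also have "prob \<dots> \<le> 3 * (sqrt (real n) * \<sigma>) ^ 4 / (real n * \<epsilon>) ^ 4"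
    using assms(5-7) by (intro normal_fourth_moment_tail[OF sum]) auto
  also have "\<dots> = 3 * \<sigma> ^ 4 / \<epsilon> ^ 4 * inverse (real n ^ 2)"
  proof -
    have "sqrt (real n) ^ 4 = real n ^ 2"
      using power_mult[of "sqrt (real n)" 2 2] by simp
    then show ?thesis
      using assms(6,7) by (simp add: field_simps)
  qed
  finally show ?thesis .
qed

lemma (in prob_space) normal_iid_slln:
  fixes F :: "'i \<Rightarrow> 'a \<Rightarrow> real" and g :: "nat \<Rightarrow> 'i"
  assumes indep: "indep_vars (\<lambda>_. borel) F I" and g: "inj g" "range g \<subseteq> I"
    and normal: "\<And>k. distributed M lborel (F (g k)) (\<lambda>x. ennreal (normal_density m \<sigma> x))"
    and "0 < \<sigma>"
  shows "AE \<omega> in M. (\<lambda>n. (\<Sum>k<n. F (g k) \<omega>) / real n) \<longlonglongrightarrow> m"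
proof (rule mean_tendsto_if_summable_tails)
  show "F (g k) \<in> borel_measurable M" for k
    using indep g(2) unfolding indep_vars_def by auto
  fix \<epsilon> :: real assume "0 < \<epsilon>"
  have "summable (\<lambda>n. 3 * \<sigma> ^ 4 / \<epsilon> ^ 4 * inverse (real n ^ 2))"
    by (intro summable_mult inverse_power_summable) simp
  then show "summable (\<lambda>n. prob {\<omega> \<in> space M. \<epsilon> \<le> \<bar>(\<Sum>k<n. F (g k) \<omega>) / real n - m\<bar>})"
    by (rule summable_comparison_test'[where N = 1])
      (use normal_iid_mean_tail[OF assms \<open>0 < \<epsilon>\<close>] in simp)
qed

lemma (in prob_space) AE_co_sample_path:
  assumes "0 < l"
    and indep: "indep_vars (\<lambda>_. borel) (\<lambda>(a, k, b). if b then R a k else C a k) ({1, 2} \<times> UNIV \<times> UNIV)"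
    and normal: "\<And>a k. a \<in> {1, 2} \<Longrightarrow> distributed M lborel (R a k) (\<lambda>x. ennreal (normal_density (\<mu> a) 1 x))"
    and ident: "\<And>a k. a \<in> {1, 2} \<Longrightarrow> distr M borel (C a k) = distr M borel (C a 0)"
    and bounded: "\<And>a k. a \<in> {1, 2} \<Longrightarrow> (AE \<omega> in M. C a k \<omega> \<in> {l..1})"
    and mean: "\<And>a k. a \<in> {1, 2} \<Longrightarrow> expectation (C a k) = c a"
  shows "AE \<omega> in M. co_sample_path (\<lambda>a k. C a k \<omega>) (\<lambda>a k. R a k \<omega>) c \<mu> l"
proof -
  define F where "F = (\<lambda>(a, k, b). if b then R a k else C a k)"
  have "AE \<omega> in M. \<forall>k. C a k \<omega> \<in> {l..1}" if "a \<in> {1,2}" for a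
    using bounded[OF that] by (simp add: AE_all_countable)
  moreover have "AE \<omega> in M. (\<lambda>n. emp (\<lambda>a k. C a k \<omega>) a n) \<longlonglongrightarrow> c a" if a: "a \<in> {1,2}" for a
  proof -
    have "AE \<omega> in M. F (a, 0, False) \<omega> \<in> {0..1}"
      using bounded[OF a, of 0] assms(1) by (auto simp: F_def elim!: eventually_mono)
    then have "AE \<omega> in M. (\<lambda>n. (\<Sum>k<n. F (a, k, False) \<omega>) / real n) \<longlonglongrightarrow> expectation (F (a, 0, False))"
      using a ident[OF a] by (intro bounded_iid_slln[OF indep[folded F_def]]) (auto simp: F_def inj_def)
    then show ?thesis
      using mean[OF a] by (simp add: F_def emp_def)
  qed
  moreover have "AE \<omega> in M. (\<lambda>n. emp (\<lambda>a k. R a k \<omega>) a n) \<longlonglongrightarrow> \<mu> a" if a: "a \<in> {1,2}" for a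
  proof -
    have "AE \<omega> in M. (\<lambda>n. (\<Sum>k<n. F (a, k, True) \<omega>) / real n) \<longlonglongrightarrow> \<mu> a"
      using a normal[OF a] by (intro normal_iid_slln[OF indep[folded F_def], where \<sigma> = 1])
        (auto simp: F_def inj_def)
    then show ?thesis
      by (simp add: F_def emp_def)
  qed
  ultimately have "AE \<omega> in M. \<forall>a\<in>{1,2}. (\<forall>k. C a k \<omega> \<in> {l..1}) \<and>
      (\<lambda>n. emp (\<lambda>a k. C a k \<omega>) a n) \<longlonglongrightarrow> c a \<and> (\<lambda>n. emp (\<lambda>a k. R a k \<omega>) a n) \<longlonglongrightarrow> \<mu> a"
    by (subst AE_finite_all) (auto intro: AE_conjI)
  then show ?thesis
    by eventually_elim (use assms(1) in \<open>unfold_locales, auto\<close>)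
qed

theorem theorem3:
  fixes M :: "'w measure" and R C :: "nat \<Rightarrow> nat \<Rightarrow> 'w \<Rightarrow> real"
    and \<mu> c :: "nat \<Rightarrow> real" and l \<alpha> B :: real
  assumes "prob_space M"
    and "1 < \<alpha>" and "\<alpha> < exp 1 / 2" and "0 < B" and "0 < l"
    and "\<mu> 1 \<noteq> \<mu> 2"
    and "prob_space.indep_vars M (\<lambda>_. borel)
           (\<lambda>(a, k, b). if b then R a k else C a k) ({1, 2} \<times> UNIV \<times> UNIV)"
    and "\<And>a k. a \<in> {1, 2} \<Longrightarrow>
           distributed M lborel (R a k) (\<lambda>x. ennreal (normal_density (\<mu> a) 1 x))"
    and "\<And>a k. a \<in> {1, 2} \<Longrightarrow> C a k \<in> borel_measurable M"
    and "\<And>a k. a \<in> {1, 2} \<Longrightarrow> distr M borel (C a k) = distr M borel (C a 0)"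
    and "\<And>a k. a \<in> {1, 2} \<Longrightarrow> (AE \<omega> in M. C a k \<omega> \<in> {l..1})"
    and "\<And>a k. a \<in> {1, 2} \<Longrightarrow> prob_space.expectation M (C a k) = c a"
  shows "AE \<omega> in M.
           Limsup (at_right 0)
             (\<lambda>\<delta>. co_J_tau \<delta> \<alpha> B (\<lambda>a k. R a k \<omega>) (\<lambda>a k. C a k \<omega>) / ereal (ln (1 / \<delta>)))
           \<le> ereal (2 * \<alpha> * (sqrt (c 1) + sqrt (c 2))^2 / (\<mu> 1 - \<mu> 2)^2)"
proof -
  interpret prob_space M
    by (rule assms(1))
  have slack: "2 * (sqrt (c 1) + sqrt (c 2))\<^sup>2 / (\<mu> 1 - \<mu> 2)\<^sup>2
      \<le> 2 * \<alpha> * (sqrt (c 1) + sqrt (c 2))\<^sup>2 / (\<mu> 1 - \<mu> 2)\<^sup>2"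
    using assms(2) by (intro divide_right_mono mult_right_mono) auto
  have "AE \<omega> in M. co_sample_path (\<lambda>a k. C a k \<omega>) (\<lambda>a k. R a k \<omega>) c \<mu> l"
    using assms(5,7,8,10-12) by (rule AE_co_sample_path)
  then show ?thesis
  proof eventually_elim
    case (elim \<omega>)
    have "Limsup (at_right 0)
        (\<lambda>\<delta>. co_J_tau \<delta> \<alpha> B (\<lambda>a k. R a k \<omega>) (\<lambda>a k. C a k \<omega>) / ereal (ln (1 / \<delta>)))
      \<le> ereal (2 * (sqrt (c 1) + sqrt (c 2))\<^sup>2 / (\<mu> 1 - \<mu> 2)\<^sup>2)"
      using assms(2,4,6) by (intro co_sample_path.Limsup_co_J_tau_le[OF elim]) auto
    also have "\<dots> \<le> ereal (2 * \<alpha> * (sqrt (c 1) + sqrt (c 2))\<^sup>2 / (\<mu> 1 - \<mu> 2)\<^sup>2)"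
      using slack by simp
    finally show ?case .
  qed
qed

end
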